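(* Let $k>0$ be real, let $M=\begin{bmatrix} k-1 & k-1 & k\\ 1&0&0\\ 0&1&0\end{bmatrix}$ and $N_0=\begin{bmatrix} k-1 & 2k & 2k\\ 2 & 1-k & 2\\ \frac{2}{k} & \frac{2}{k} & -\frac{1}{k}(k^2+k-2)\end{bmatrix}$. For integers $n\ge1$ put $\mathbf{J}_n=M^n$ and $\mathbf{j}_n=N_0M^n$. Then for every integer $n\ge1$: $$\left(\mathbf{j}_{n+1}\right)^2=\left(\mathbf{j}_1\right)^2\mathbf{J}_{2n},\qquad \mathbf{j}_{2n+1}=\mathbf{J}_n\,\mathbf{j}_{n+1}.$$ *)

theory Defs
  imports "HOL-Analysis.Analysis"
begin

definition Mmat :: "real \<Rightarrow> real^3^3" where
  "Mmat k = vector [vector [k - 1, k - 1, k], vector [1, 0, 0], vector [0, 1, 0]]"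

definition N0mat :: "real \<Rightarrow> real^3^3" where
  "N0mat k = vector [vector [k - 1, 2 * k, 2 * k], vector [2, 1 - k, 2],
                     vector [2 / k, 2 / k, - (1 / k) * (k^2 + k - 2)]]"

primrec matpow :: "real^3^3 \<Rightarrow> nat \<Rightarrow> real^3^3" where
  "matpow A 0 = mat 1"
| "matpow A (Suc n) = matpow A n ** A"

definition Jmat :: "real \<Rightarrow> nat \<Rightarrow> real^3^3" where
  "Jmat k n = matpow (Mmat k) n"

definition jmat :: "real \<Rightarrow> nat \<Rightarrow> real^3^3" where
  "jmat k n = N0mat k ** matpow (Mmat k) n"

end

theory Submission
  imports Defs
begin

text \<open>For \<open>k \<noteq> 0\<close> the matrix \<open>N\<^sub>0\<close> commutes with \<open>M\<close>, hence with every power of \<open>M\<close>.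
  Then \<open>j\<^sub>m j\<^sub>n = N\<^sub>0\<^sup>2 M\<^sup>m\<^sup>+\<^sup>n\<close> and \<open>J\<^sub>m j\<^sub>n = j\<^sub>m\<^sub>+\<^sub>n\<close>, and both identities are
  bookkeeping of exponents; in particular they hold for all \<open>n\<close>, including \<open>n = 0\<close>.\<close>

lemma matpow_add: "matpow A (m + n) = matpow A m ** matpow A n"
  by (induction n) (simp_all add: matrix_mul_assoc)

lemma matpow_commute:
  assumes "A ** B = B ** A"
  shows "A ** matpow B n = matpow B n ** A"
proof (induction n)
  case 0
  then show ?case by simp
next
  case (Suc n)
  have "A ** matpow B (Suc n) = (A ** matpow B n) ** B"
    by (simp add: matrix_mul_assoc)
  also have "\<dots> = matpow B n ** (A ** B)"
    using Suc by (simp add: matrix_mul_assoc)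
  also have "\<dots> = matpow B (Suc n) ** A"
    using assms by (simp add: matrix_mul_assoc)
  finally show ?case .
qed

lemma N0mat_Mmat_commute:
  assumes "k \<noteq> 0"
  shows "N0mat k ** Mmat k = Mmat k ** N0mat k"
  using assms
  by (simp add: vec_eq_iff forall_3 matrix_matrix_mult_def sum_3 Mmat_def N0mat_def
      field_simps power2_eq_square)

lemma N0mat_matpow_commute:
  assumes "k \<noteq> 0"
  shows "N0mat k ** matpow (Mmat k) n = matpow (Mmat k) n ** N0mat k"
  using matpow_commute[OF N0mat_Mmat_commute[OF assms]] .

lemma Jmat_add: "Jmat k (m + n) = Jmat k m ** Jmat k n"
  unfolding Jmat_def by (rule matpow_add)

lemma jmat_mult_jmat:
  assumes "k \<noteq> 0"
  shows "jmat k m ** jmat k n = (N0mat k ** N0mat k) ** Jmat k (m + n)"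
proof -
  have "jmat k m ** jmat k n = N0mat k ** (matpow (Mmat k) m ** N0mat k) ** matpow (Mmat k) n"
    by (simp add: jmat_def matrix_mul_assoc)
  also have "\<dots> = N0mat k ** (N0mat k ** matpow (Mmat k) m) ** matpow (Mmat k) n"
    by (simp only: N0mat_matpow_commute[OF assms])
  finally show ?thesis
    by (simp add: Jmat_def matpow_add matrix_mul_assoc)
qed

lemma Jmat_mult_jmat:
  assumes "k \<noteq> 0"
  shows "Jmat k m ** jmat k n = jmat k (m + n)"
proof -
  have "Jmat k m ** jmat k n = (matpow (Mmat k) m ** N0mat k) ** matpow (Mmat k) n"
    by (simp add: Jmat_def jmat_def matrix_mul_assoc)
  also have "\<dots> = jmat k (m + n)"
    by (simp only: N0mat_matpow_commute[OF assms, symmetric] jmat_def matpow_add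
        matrix_mul_assoc)
  finally show ?thesis .
qed

theorem mainTheorem6:
  fixes k :: real and n :: nat
  assumes "k > 0" and "n \<ge> 1"
  shows "jmat k (n + 1) ** jmat k (n + 1) = (jmat k 1 ** jmat k 1) ** Jmat k (2 * n)
       \<and> jmat k (2 * n + 1) = Jmat k n ** jmat k (n + 1)"
proof
  have k: "k \<noteq> 0"
    using assms(1) by simp
  have "jmat k (n + 1) ** jmat k (n + 1) = (N0mat k ** N0mat k) ** Jmat k (2 + 2 * n)"
    using jmat_mult_jmat[OF k] by (simp add: mult_2)
  also have "\<dots> = (jmat k 1 ** jmat k 1) ** Jmat k (2 * n)"
    by (simp only: jmat_mult_jmat[OF k] one_add_one Jmat_add matrix_mul_assoc)
  finally show "jmat k (n + 1) ** jmat k (n + 1) = (jmat k 1 ** jmat k 1) ** Jmat k (2 * n)" .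
  show "jmat k (2 * n + 1) = Jmat k n ** jmat k (n + 1)"
    using Jmat_mult_jmat[OF k, of n "n + 1"] by (simp add: mult_2 add.assoc)
qed

end
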